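(* Let $n>1$, $\rho>0$ and $c>0$, and let $\mathrm{ad}(B_1^R)^*$ denote the adjoint of $\mathrm{ad}(B_1^R)$ with respect to the inner product $g_\rho^c$ on $\mathfrak{l}$. Then $[\mathrm{ad}(B_1^R),\mathrm{ad}(B_1^R)^*]\neq0$.
   Context: Fix $n\ge 2$, $\rho>0$, $c\ge0$. The real Lie algebra $\mathfrak{l}$ has basis $B_a^R,B_a^I$ ($a=1,\dots,n-1$), $e_k,f_k$ ($k=0,\dots,n-1$), $Z$. Brackets (unlisted brackets of basis elements, up to antisymmetry, are zero): $[B_1^R,B_1^I]=2B_1^I$; for $a\in\{2,\dots,n-1\}$: $[B_1^R,B_a^R]=B_a^R$, $[B_1^R,B_a^I]=B_a^I$, $[B_a^R,B_a^I]=\tfrac12B_1^I$; $[e_0,f_0]=Z$, $[e_a,f_a]=-Z$ ($a\ge1$); $[B,Z]=0$. Mixed brackets after complex-bilinear extension, $E_k:=e_k-if_k$, $[B,\bar E_k]=\overline{[B,E_k]}$ for real $B$: for $a\ge2$, $[B_1^R,E_k]=-\delta_{k0}E_1-\delta_{k1}E_0$, $[B_a^R,E_k]=-\tfrac12(\delta_{k0}+\delta_{k1})E_a-\tfrac12\delta_{ka}(E_0-E_1)$, $[B_1^I,E_k]=-i(\delta_{k0}+\delta_{k1})(E_0-E_1)$, $[B_a^I,E_k]=\tfrac{i}{2}(\delta_{k0}+\delta_{k1})E_a-\tfrac{i}{2}\delta_{ka}(E_0-E_1)$. Inner product $g_\rho^c$: $g(B_1^R,B_1^R)=\frac{\rho+c}{\rho}$,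 $g(B_1^I,B_1^I)=\frac{(\rho+c)^3}{\rho^2(\rho+2c)}$, $g(B_a^R,B_a^R)=g(B_a^I,B_a^I)=\frac{\rho+c}{4\rho}$ ($a\ge2$), $g(e_0,e_0)=g(f_0,f_0)=\frac{\rho+2c}{4\rho^2}$, $g(e_a,e_a)=g(f_a,f_a)=\frac1{4\rho}$ ($a\ge1$), $g(Z,Z)=\frac{\rho+c}{4\rho^2(\rho+2c)}$, $g(B_1^I,Z)=-\frac{c(\rho+c)}{2\rho^2(\rho+2c)}$, all other distinct basis pairs orthogonal. *)

theory Defs
  imports Complex_Main
begin

(* Basis labels of the real Lie algebra l:
   LBR a = B_a^R, LBI a = B_a^I (1 <= a <= n-1),
   LE k = e_k, LF k = f_k (0 <= k <= n-1), LZ = Z. *)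
datatype lbasis = LBR nat | LBI nat | LE nat | LF nat | LZ

definition lbas :: "nat \<Rightarrow> lbasis set" where
  "lbas n = LBR ` {1..n-1} \<union> LBI ` {1..n-1} \<union> LE ` {..<n} \<union> LF ` {..<n} \<union> {LZ}"

definition lvec :: "nat \<Rightarrow> (lbasis \<Rightarrow> real) set" where
  "lvec n = {v. \<forall>j. j \<notin> lbas n \<longrightarrow> v j = 0}"

definition ind :: "lbasis \<Rightarrow> lbasis \<Rightarrow> real" where
  "ind b j = (if j = b then 1 else 0)"

(* Listed brackets [x,y] of basis elements (as coordinate vectors, last argument
   = coordinate).  The mixed brackets are the real/imaginary parts of the
   complex brackets with E_k = e_k - i f_k. *)
definition bu :: "lbasis \<Rightarrow> lbasis \<Rightarrow> lbasis \<Rightarrow> real" where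
  "bu x y j = (case (x, y) of
     (LBR a, LBR b) \<Rightarrow> (if a = 1 \<and> b \<ge> 2 then ind (LBR b) j else 0)
   | (LBR a, LBI b) \<Rightarrow>
        (if a = 1 \<and> b = 1 then 2 * ind (LBI 1) j
         else if a = 1 \<and> b \<ge> 2 then ind (LBI b) j
         else if a \<ge> 2 \<and> b = a then (1/2) * ind (LBI 1) j else 0)
   | (LBR a, LE k) \<Rightarrow>
        (if a = 1 then (if k = 0 then - ind (LE 1) j else if k = 1 then - ind (LE 0) j else 0)
         else (if k = 0 \<or> k = 1 then - (1/2) * ind (LE a) j
               else if k = a then - (1/2) * (ind (LE 0) j - ind (LE 1) j) else 0))
   | (LBR a, LF k) \<Rightarrow>
        (if a = 1 then (if k = 0 then - ind (LF 1) j else if k = 1 then - ind (LF 0) j else 0)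
         else (if k = 0 \<or> k = 1 then - (1/2) * ind (LF a) j
               else if k = a then - (1/2) * (ind (LF 0) j - ind (LF 1) j) else 0))
   | (LBI a, LE k) \<Rightarrow>
        (if a = 1 then (if k = 0 \<or> k = 1 then - (ind (LF 0) j - ind (LF 1) j) else 0)
         else (if k = 0 \<or> k = 1 then (1/2) * ind (LF a) j
               else if k = a then - (1/2) * (ind (LF 0) j - ind (LF 1) j) else 0))
   | (LBI a, LF k) \<Rightarrow>
        (if a = 1 then (if k = 0 \<or> k = 1 then ind (LE 0) j - ind (LE 1) j else 0)
         else (if k = 0 \<or> k = 1 then - (1/2) * ind (LE a) j
               else if k = a then (1/2) * (ind (LE 0) j - ind (LE 1) j) else 0))
   | (LE k, LF l) \<Rightarrow> (if k = l then (if k = 0 then ind LZ j else - ind LZ j) else 0)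
   | _ \<Rightarrow> 0)"

definition brb :: "lbasis \<Rightarrow> lbasis \<Rightarrow> lbasis \<Rightarrow> real" where
  "brb x y j = bu x y j - bu y x j"

definition lbr :: "nat \<Rightarrow> (lbasis \<Rightarrow> real) \<Rightarrow> (lbasis \<Rightarrow> real) \<Rightarrow> (lbasis \<Rightarrow> real)" where
  "lbr n u v = (\<lambda>j. \<Sum>x\<in>lbas n. \<Sum>y\<in>lbas n. u x * v y * brb x y j)"

definition ad :: "nat \<Rightarrow> (lbasis \<Rightarrow> real) \<Rightarrow> (lbasis \<Rightarrow> real) \<Rightarrow> (lbasis \<Rightarrow> real)" where
  "ad n u = lbr n u"

definition gdiag :: "real \<Rightarrow> real \<Rightarrow> lbasis \<Rightarrow> real" where
  "gdiag \<rho> c x = (case x of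
     LBR a \<Rightarrow> (if a = 1 then (\<rho> + c) / \<rho> else (\<rho> + c) / (4 * \<rho>))
   | LBI a \<Rightarrow> (if a = 1 then (\<rho> + c)^3 / (\<rho>^2 * (\<rho> + 2*c)) else (\<rho> + c) / (4 * \<rho>))
   | LE k \<Rightarrow> (if k = 0 then (\<rho> + 2*c) / (4 * \<rho>^2) else 1 / (4 * \<rho>))
   | LF k \<Rightarrow> (if k = 0 then (\<rho> + 2*c) / (4 * \<rho>^2) else 1 / (4 * \<rho>))
   | LZ \<Rightarrow> (\<rho> + c) / (4 * \<rho>^2 * (\<rho> + 2*c)))"

definition gram :: "real \<Rightarrow> real \<Rightarrow> lbasis \<Rightarrow> lbasis \<Rightarrow> real" where
  "gram \<rho> c x y =
     (if x = y then gdiag \<rho> c x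
      else if (x = LBI 1 \<and> y = LZ) \<or> (x = LZ \<and> y = LBI 1)
        then - (c * (\<rho> + c)) / (2 * \<rho>^2 * (\<rho> + 2*c))
      else 0)"

definition ginner :: "nat \<Rightarrow> real \<Rightarrow> real \<Rightarrow> (lbasis \<Rightarrow> real) \<Rightarrow> (lbasis \<Rightarrow> real) \<Rightarrow> real" where
  "ginner n \<rho> c u v = (\<Sum>x\<in>lbas n. \<Sum>y\<in>lbas n. u x * v y * gram \<rho> c x y)"

definition is_adjoint ::
  "nat \<Rightarrow> real \<Rightarrow> real \<Rightarrow> ((lbasis \<Rightarrow> real) \<Rightarrow> (lbasis \<Rightarrow> real))
       \<Rightarrow> ((lbasis \<Rightarrow> real) \<Rightarrow> (lbasis \<Rightarrow> real)) \<Rightarrow> bool" where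
  "is_adjoint n \<rho> c A T \<longleftrightarrow>
     (\<forall>v\<in>lvec n. T v \<in> lvec n) \<and>
     (\<forall>u\<in>lvec n. \<forall>v\<in>lvec n. ginner n \<rho> c (A u) v = ginner n \<rho> c u (T v))"

end

theory Submission
  imports Defs
begin

text \<open>
  In coordinates, \<open>A = ad(B\<^sub>1\<^sup>R)\<close> is diagonal except that it sends \<open>e\<^sub>0 \<mapsto> -e\<^sub>1\<close>,
  \<open>e\<^sub>1 \<mapsto> -e\<^sub>0\<close> (and likewise for \<open>f\<^sub>0, f\<^sub>1\<close>), while the Gram matrix \<open>G\<close> of \<open>g\<^sub>\<rho>\<^sup>c\<close> is
  diagonal except for its \<open>B\<^sub>1\<^sup>I\<close>--\<open>Z\<close> block. So the adjoint \<open>G\<^sup>-\<^sup>1 A\<^sup>T G\<close> can be written down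
  block by block. On \<open>span{e\<^sub>0, e\<^sub>1}\<close>, with \<open>a = g(e\<^sub>0,e\<^sub>0)\<close> and \<open>b = g(e\<^sub>1,e\<^sub>1)\<close>, any adjoint
  \<open>A\<^sup>*\<close> makes the \<open>e\<^sub>0\<close>-coordinate of \<open>A A\<^sup>* e\<^sub>0\<close> equal to \<open>a/b\<close> and that of \<open>A\<^sup>* A e\<^sub>0\<close>
  equal to \<open>b/a\<close>; but \<open>a \<noteq> b\<close> as soon as \<open>c \<noteq> 0\<close>.
\<close>

lemma finite_lbas [simp]: "finite (lbas n)"
  by (simp add: lbas_def)

lemma mem_lbas [simp]:
  "LBR a \<in> lbas n \<longleftrightarrow> 1 \<le> a \<and> a \<le> n - 1"
  "LBI a \<in> lbas n \<longleftrightarrow> 1 \<le> a \<and> a \<le> n - 1"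
  "LE k \<in> lbas n \<longleftrightarrow> k < n"
  "LF k \<in> lbas n \<longleftrightarrow> k < n"
  "LZ \<in> lbas n"
  by (auto simp: lbas_def)

lemma ind_in_lvec: "b \<in> lbas n \<Longrightarrow> ind b \<in> lvec n"
  by (auto simp: lvec_def ind_def)

lemma sum_mult_ind [simp]:
  "finite S \<Longrightarrow> (\<Sum>x\<in>S. f x * ind b x) = (if b \<in> S then f b else 0)"
  by (simp add: ind_def if_distrib sum.delta' cong: if_cong)

lemma sum_ind_mult [simp]:
  "finite S \<Longrightarrow> (\<Sum>x\<in>S. ind b x * f x) = (if b \<in> S then f b else 0)"
  using sum_mult_ind[of S f b] by (simp add: mult.commute)

lemma ginner_uminus_left: "ginner n \<rho> c (\<lambda>j. - u j) v = - ginner n \<rho> c u v"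
  and ginner_uminus_right: "ginner n \<rho> c u (\<lambda>j. - v j) = - ginner n \<rho> c u v"
  by (simp_all add: ginner_def sum_negf)

lemma ginner_eq_sum_gram_rows:
  "ginner n \<rho> c u v = (\<Sum>y\<in>lbas n. u y * (\<Sum>z\<in>lbas n. v z * gram \<rho> c y z))"
  by (simp add: ginner_def sum_distrib_left mult_ac)

lemma gram_diagonal_row:
  assumes "b \<noteq> LBI 1" "b \<noteq> LZ"
  shows "gram \<rho> c b z = gdiag \<rho> c b * ind b z" and "gram \<rho> c z b = gdiag \<rho> c b * ind b z"
  using assms by (auto simp: gram_def ind_def)

lemma ginner_ind_left:
  assumes "b \<in> lbas n" "b \<noteq> LBI 1" "b \<noteq> LZ"
  shows "ginner n \<rho> c (ind b) v = gdiag \<rho> c b * v b"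
  using assms
  by (simp add: ginner_eq_sum_gram_rows gram_diagonal_row mult.assoc[symmetric]
      flip: sum_distrib_right)

lemma ginner_ind_right:
  assumes "b \<in> lbas n" "b \<noteq> LBI 1" "b \<noteq> LZ"
  shows "ginner n \<rho> c u (ind b) = gdiag \<rho> c b * u b"
  using assms
  by (simp add: ginner_eq_sum_gram_rows gram_diagonal_row mult.assoc[symmetric]
      flip: sum_distrib_right)

lemma gdiag_pos: "\<rho> > 0 \<Longrightarrow> c \<ge> 0 \<Longrightarrow> gdiag \<rho> c x > 0"
  by (cases x) (auto simp: gdiag_def)

definition gram_cross :: "real \<Rightarrow> real \<Rightarrow> real" where
  "gram_cross \<rho> c = - (c * (\<rho> + c)) / (2 * \<rho>^2 * (\<rho> + 2*c))"

lemma gram_row_sum: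
  assumes "n > 1" "x \<in> lbas n"
  shows "(\<Sum>z\<in>lbas n. v z * gram \<rho> c x z) = gdiag \<rho> c x * v x +
     (if x = LBI 1 then gram_cross \<rho> c * v LZ else if x = LZ then gram_cross \<rho> c * v (LBI 1) else 0)"
proof -
  have "(\<Sum>z\<in>lbas n. v z * gram \<rho> c x z) =
      (\<Sum>z\<in>lbas n. (gdiag \<rho> c x * v z) * ind x z) +
      (\<Sum>z\<in>lbas n. (if x = LBI 1 then gram_cross \<rho> c * v z else 0) * ind LZ z) +
      (\<Sum>z\<in>lbas n. (if x = LZ then gram_cross \<rho> c * v z else 0) * ind (LBI 1) z)"
    unfolding sum.distrib[symmetric]
    by (rule sum.cong) (auto simp: gram_def ind_def gram_cross_def)
  then show ?thesis
    using assms by auto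
qed

lemma ad_ind_apply:
  assumes "b \<in> lbas n"
  shows "ad n (ind b) u x = (\<Sum>y\<in>lbas n. u y * brb b y x)"
  using assms by (simp add: ad_def lbr_def mult.assoc flip: sum_distrib_left)

lemma ginner_ad_ind_left:
  assumes "b \<in> lbas n"
  shows "ginner n \<rho> c (ad n (ind b) u) v =
    (\<Sum>y\<in>lbas n. u y * (\<Sum>x\<in>lbas n. brb b y x * (\<Sum>z\<in>lbas n. v z * gram \<rho> c x z)))"
proof -
  have "ginner n \<rho> c (ad n (ind b) u) v =
      (\<Sum>x\<in>lbas n. \<Sum>y\<in>lbas n. u y * (brb b y x * (\<Sum>z\<in>lbas n. v z * gram \<rho> c x z)))"
    by (simp add: ginner_eq_sum_gram_rows ad_ind_apply[OF assms] sum_distrib_right mult.assoc)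
  also have "\<dots> = (\<Sum>y\<in>lbas n. u y * (\<Sum>x\<in>lbas n. brb b y x * (\<Sum>z\<in>lbas n. v z * gram \<rho> c x z)))"
    by (subst sum.swap) (simp add: sum_distrib_left)
  finally show ?thesis .
qed

lemma brb_LBR1:
  "brb (LBR 1) y x = (case y of
      LBR a \<Rightarrow> if a \<ge> 2 then ind (LBR a) x else 0
    | LBI a \<Rightarrow> if a = 1 then 2 * ind (LBI 1) x else if a \<ge> 2 then ind (LBI a) x else 0
    | LE k \<Rightarrow> if k = 0 then - ind (LE 1) x else if k = 1 then - ind (LE 0) x else 0
    | LF k \<Rightarrow> if k = 0 then - ind (LF 1) x else if k = 1 then - ind (LF 0) x else 0
    | LZ \<Rightarrow> 0)"
  by (cases y) (auto simp: brb_def bu_def)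

lemma sum_brb_LBR1:
  assumes "n > 1" "y \<in> lbas n"
  shows "(\<Sum>x\<in>lbas n. brb (LBR 1) y x * F x) = (case y of
      LBR a \<Rightarrow> if a \<ge> 2 then F (LBR a) else 0
    | LBI a \<Rightarrow> if a = 1 then 2 * F (LBI 1) else F (LBI a)
    | LE k \<Rightarrow> if k = 0 then - F (LE 1) else if k = 1 then - F (LE 0) else 0
    | LF k \<Rightarrow> if k = 0 then - F (LF 1) else if k = 1 then - F (LF 0) else 0
    | LZ \<Rightarrow> 0)"
  using assms
  by (cases y) (auto simp: brb_LBR1[unfolded One_nat_def] sum_negf mult.assoc simp flip: sum_distrib_left)

definition gram_block_det :: "real \<Rightarrow> real \<Rightarrow> real" where
  "gram_block_det \<rho> c = gdiag \<rho> c (LBI 1) * gdiag \<rho> c LZ - (gram_cross \<rho> c)^2"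

lemma gram_block_det_pos:
  assumes "\<rho> > 0" "c \<ge> 0"
  shows "gram_block_det \<rho> c > 0"
proof -
  have "gram_block_det \<rho> c = (\<rho> + c)^2 * (\<rho> * (\<rho> + 2*c)) / (4 * \<rho>^4 * (\<rho> + 2*c)^2)"
    using assms unfolding gram_block_det_def gdiag_def gram_cross_def
    by (simp add: divide_simps) (simp add: algebra_simps power2_eq_square power3_eq_cube power4_eq_xxxx)
  then show ?thesis
    using assms by simp
qed

definition ad_LBR1_adjoint :: "nat \<Rightarrow> real \<Rightarrow> real \<Rightarrow> (lbasis \<Rightarrow> real) \<Rightarrow> lbasis \<Rightarrow> real" where
  "ad_LBR1_adjoint n \<rho> c v j = (case j of
     LBR a \<Rightarrow> if 2 \<le> a \<and> a \<le> n - 1 then v (LBR a) else 0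
   | LBI a \<Rightarrow>
       if a = 1 then 2 * gdiag \<rho> c LZ * (gdiag \<rho> c (LBI 1) * v (LBI 1) + gram_cross \<rho> c * v LZ)
                       / gram_block_det \<rho> c
       else if 2 \<le> a \<and> a \<le> n - 1 then v (LBI a) else 0
   | LE k \<Rightarrow> if k = 0 then - gdiag \<rho> c (LE 1) / gdiag \<rho> c (LE 0) * v (LE 1)
             else if k = 1 then - gdiag \<rho> c (LE 0) / gdiag \<rho> c (LE 1) * v (LE 0) else 0
   | LF k \<Rightarrow> if k = 0 then - gdiag \<rho> c (LF 1) / gdiag \<rho> c (LF 0) * v (LF 1)
             else if k = 1 then - gdiag \<rho> c (LF 0) / gdiag \<rho> c (LF 1) * v (LF 0) else 0
   | LZ \<Rightarrow> - 2 * gram_cross \<rho> c * (gdiag \<rho> c (LBI 1) * v (LBI 1) + gram_cross \<rho> c * v LZ)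
           / gram_block_det \<rho> c)"

lemma ad_LBR1_adjoint_in_lvec: "n > 1 \<Longrightarrow> ad_LBR1_adjoint n \<rho> c v \<in> lvec n"
  by (auto simp: lvec_def ad_LBR1_adjoint_def split: lbasis.splits)

lemma ad_LBR1_adjoint_row_eq:
  assumes "n > 1" "\<rho> > 0" "c \<ge> 0" "y \<in> lbas n"
  shows "(\<Sum>x\<in>lbas n. brb (LBR 1) y x * (\<Sum>z\<in>lbas n. v z * gram \<rho> c x z))
       = (\<Sum>z\<in>lbas n. ad_LBR1_adjoint n \<rho> c v z * gram \<rho> c y z)"
proof -
  let ?Gv = "\<lambda>w x. gdiag \<rho> c x * w x +
     (if x = LBI 1 then gram_cross \<rho> c * w LZ else if x = LZ then gram_cross \<rho> c * w (LBI 1) else 0)"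
  have "(\<Sum>x\<in>lbas n. brb (LBR 1) y x * (\<Sum>z\<in>lbas n. v z * gram \<rho> c x z))
      = (\<Sum>x\<in>lbas n. brb (LBR 1) y x * ?Gv v x)"
    using gram_row_sum[OF assms(1)] by (intro sum.cong) auto
  also have "\<dots> = ?Gv (ad_LBR1_adjoint n \<rho> c v) y"
  proof -
    have "gdiag \<rho> c x \<noteq> 0" for x
      using gdiag_pos[OF assms(2,3), of x] by simp
    moreover have "gdiag \<rho> c (LBI 1) * (2 * gdiag \<rho> c LZ * w) / gram_block_det \<rho> c
        - gram_cross \<rho> c * (2 * gram_cross \<rho> c * w) / gram_block_det \<rho> c = 2 * w" for w
    proof -
      have "gram_block_det \<rho> c \<noteq> 0"
        using gram_block_det_pos[OF assms(2,3)] by simp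
      then show ?thesis
        by (simp add: field_simps) (simp add: gram_block_det_def algebra_simps power2_eq_square)
    qed
    ultimately show ?thesis
      unfolding sum_brb_LBR1[OF assms(1,4)] using assms
      by (cases y) (auto simp: ad_LBR1_adjoint_def)
  qed
  also have "\<dots> = (\<Sum>z\<in>lbas n. ad_LBR1_adjoint n \<rho> c v z * gram \<rho> c y z)"
    using gram_row_sum[OF assms(1,4)] by simp
  finally show ?thesis .
qed

lemma is_adjoint_ad_LBR1:
  assumes "n > 1" "\<rho> > 0" "c \<ge> 0"
  shows "is_adjoint n \<rho> c (ad n (ind (LBR 1))) (ad_LBR1_adjoint n \<rho> c)"
  unfolding is_adjoint_def
proof (intro conjI ballI)
  fix u v
  have "ginner n \<rho> c (ad n (ind (LBR 1)) u) v =
      (\<Sum>y\<in>lbas n. u y * (\<Sum>x\<in>lbas n. brb (LBR 1) y x * (\<Sum>z\<in>lbas n. v z * gram \<rho> c x z)))"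
    using assms(1) by (simp add: ginner_ad_ind_left)
  also have "\<dots> = (\<Sum>y\<in>lbas n. u y * (\<Sum>z\<in>lbas n. ad_LBR1_adjoint n \<rho> c v z * gram \<rho> c y z))"
    using ad_LBR1_adjoint_row_eq[OF assms] by simp
  also have "\<dots> = ginner n \<rho> c u (ad_LBR1_adjoint n \<rho> c v)"
    by (simp add: ginner_eq_sum_gram_rows)
  finally show "ginner n \<rho> c (ad n (ind (LBR 1)) u) v = ginner n \<rho> c u (ad_LBR1_adjoint n \<rho> c v)" .
qed (use ad_LBR1_adjoint_in_lvec assms in blast)

lemma ad_LBR1_LE01:
  assumes "n > 1"
  shows "ad n (ind (LBR 1)) w (LE 0) = - w (LE 1)"
    and "ad n (ind (LBR 1)) (ind (LE 0)) = (\<lambda>j. - ind (LE 1) j)"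
    and "ad n (ind (LBR 1)) (ind (LE 1)) = (\<lambda>j. - ind (LE 0) j)"
proof -
  have "brb (LBR 1) y (LE 0) = - ind (LE 1) y" for y
    by (cases y) (auto simp: brb_LBR1[unfolded One_nat_def] ind_def)
  then show "ad n (ind (LBR 1)) w (LE 0) = - w (LE 1)"
    using assms by (simp add: ad_ind_apply sum_negf)
  show "ad n (ind (LBR 1)) (ind (LE 0)) = (\<lambda>j. - ind (LE 1) j)"
    and "ad n (ind (LBR 1)) (ind (LE 1)) = (\<lambda>j. - ind (LE 0) j)"
    using assms by (intro ext; simp add: ad_ind_apply brb_LBR1[unfolded One_nat_def])+
qed

lemma adjoint_ad_LBR1_LE_coords:
  assumes "n > 1" and adj: "is_adjoint n \<rho> c (ad n (ind (LBR 1))) T"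
  shows "gdiag \<rho> c (LE 1) * T (ind (LE 0)) (LE 1) = - gdiag \<rho> c (LE 0)"
    and "gdiag \<rho> c (LE 0) * T (ad n (ind (LBR 1)) (ind (LE 0))) (LE 0) = gdiag \<rho> c (LE 1)"
proof -
  have adjoint_eq: "ginner n \<rho> c (ad n (ind (LBR 1)) u) v = ginner n \<rho> c u (T v)"
    if "u \<in> lvec n" "v \<in> lvec n" for u v
    using adj that unfolding is_adjoint_def by blast
  have e: "ind (LE 0) \<in> lvec n" "ind (LE 1) \<in> lvec n" "(\<lambda>j. - ind (LE 1) j) \<in> lvec n"
    using assms(1) by (auto simp: ind_in_lvec) (simp add: lvec_def ind_def)
  show "gdiag \<rho> c (LE 1) * T (ind (LE 0)) (LE 1) = - gdiag \<rho> c (LE 0)"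
    using adjoint_eq[OF e(2,1), unfolded ad_LBR1_LE01[OF assms(1)]] assms(1)
    by (simp add: ginner_uminus_left ginner_ind_left ginner_ind_right) (simp add: ind_def)
  show "gdiag \<rho> c (LE 0) * T (ad n (ind (LBR 1)) (ind (LE 0))) (LE 0) = gdiag \<rho> c (LE 1)"
    unfolding ad_LBR1_LE01(2)[OF assms(1)]
    using adjoint_eq[OF e(1,3), unfolded ad_LBR1_LE01[OF assms(1)]] assms(1)
    by (simp add: ginner_uminus_left ginner_uminus_right ginner_ind_left ginner_ind_right) (simp add: ind_def)
qed

lemma gdiag_LE0_ne_LE1: "\<rho> > 0 \<Longrightarrow> c \<noteq> 0 \<Longrightarrow> gdiag \<rho> c (LE 0) \<noteq> gdiag \<rho> c (LE 1)"
  by (simp add: gdiag_def field_simps power2_eq_square)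

lemma ad_LBR1_not_commute_adjoint:
  assumes "n > 1" "\<rho> > 0" "c > 0" and adj: "is_adjoint n \<rho> c (ad n (ind (LBR 1))) T"
  shows "ad n (ind (LBR 1)) (T (ind (LE 0))) \<noteq> T (ad n (ind (LBR 1)) (ind (LE 0)))"
proof
  let ?a = "gdiag \<rho> c (LE 0)" and ?b = "gdiag \<rho> c (LE 1)"
  assume commute: "ad n (ind (LBR 1)) (T (ind (LE 0))) = T (ad n (ind (LBR 1)) (ind (LE 0)))"
  have pos: "?a > 0" "?b > 0"
    using gdiag_pos assms(2,3) by auto
  have "ad n (ind (LBR 1)) (T (ind (LE 0))) (LE 0) = ?a / ?b"
    unfolding ad_LBR1_LE01(1)[OF assms(1)]
    using adjoint_ad_LBR1_LE_coords(1)[OF assms(1) adj] pos by (simp add: field_simps)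
  moreover have "T (ad n (ind (LBR 1)) (ind (LE 0))) (LE 0) = ?b / ?a"
    using adjoint_ad_LBR1_LE_coords(2)[OF assms(1) adj] pos by (simp add: field_simps)
  ultimately have "?a / ?b = ?b / ?a"
    using commute by simp
  then have "?a\<^sup>2 = ?b\<^sup>2"
    using pos by (simp add: field_simps power2_eq_square)
  then have "?a = ?b"
    using pos by (simp add: power2_eq_iff_nonneg)
  with gdiag_LE0_ne_LE1[OF assms(2)] assms(3) show False
    by simp
qed

theorem lemma4p14:
  fixes n :: nat and \<rho> c :: real
  assumes "n > 1" and "\<rho> > 0" and "c > 0"
  shows "(\<exists>T. is_adjoint n \<rho> c (ad n (ind (LBR 1))) T) \<and>
         (\<forall>T. is_adjoint n \<rho> c (ad n (ind (LBR 1))) T \<longrightarrow>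
            (\<exists>u\<in>lvec n. ad n (ind (LBR 1)) (T u) \<noteq> T (ad n (ind (LBR 1)) u)))"
proof (intro conjI allI impI)
  show "\<exists>T. is_adjoint n \<rho> c (ad n (ind (LBR 1))) T"
    using is_adjoint_ad_LBR1[OF assms(1,2) less_imp_le[OF assms(3)]] by blast
next
  fix T
  assume "is_adjoint n \<rho> c (ad n (ind (LBR 1))) T"
  moreover have "ind (LE 0) \<in> lvec n"
    using assms(1) by (simp add: ind_in_lvec)
  ultimately show "\<exists>u\<in>lvec n. ad n (ind (LBR 1)) (T u) \<noteq> T (ad n (ind (LBR 1)) u)"
    using ad_LBR1_not_commute_adjoint[OF assms] by blast
qed

end
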